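(* For a set $\Psi\subseteq\mathcal{K}$, let $EE^*_\Psi$ denote the optimal value of problem (P2$_\Psi$) (defined in the context) with $x_k=1$ for $k\in\Psi$ and $x_k=0$ for $k\notin\Psi$, and for each $m\in\mathcal{K}$ let $EE^*_m$ denote the optimal value of the trading-EE problem (T) for MU $m$. Let $m\in\mathcal{K}\setminus\Psi$. Say that serving MU $m$ improves the EE of the SC if $EE^*_{\Psi\cup\{m\}}>EE^*_\Psi$. Then: (1) if constraints C1 and C4 are both removed from (P2), serving MU $m$ improves the EE of the SC if and only if $EE^*_m>EE^*_\Psi$; (2) if constraint C1 is removed from (P2) (C4 kept), serving MU $m$ improves the EE of the SC if $EE^*_m>EE^*_\Psi$; (3) if constraint C4 is removed from (P2) (C1 kept), serving MU $m$ improves the EE of the SC only if $EE^*_m>EE^*_\Psi$.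
   Context: Setting: $\mathcal{K}=\{1,\dots,K\}$ macro users (MUs), $\mathcal{N}=\{1,\dots,N\}$ small-cell users (SUs). Constants: $N_0>0$, $\xi\in(0,1]$, $P_{\rm c}>0$, $P^{SC}_{\max}>0$, $R^{SC}_{\min}\ge0$; for each $k$: $W^k_{MC}>0$, $R^k_{MC}>0$, $h_k>0$, $g_{k,n}>0$ ($n\in\mathcal{N}$); for each $n$: $B^n_{SC}>0$, $g_n>0$. Let $k'\in\arg\max_{n}g_{k,n}$. Let $\rho(b,p,g)=b\log_2(1+\frac{pg}{bN_0})$ ($=0$ if $b=0$). Problem (P2$_\Psi$): with $x_k=\mathbf 1[k\in\Psi]$, maximize over $p_n\ge0$, $p_{k,k'}\ge0$, $b_{k,k'}\ge0$, $q_k\ge0$, $w_k\ge0$ $$\frac{\sum_{n}\rho(B^n_{SC},p_n,g_n)+\sum_{k}x_k\rho(b_{k,k'},p_{k,k'},g_{k,k'})}{\sum_n\frac{p_n}{\xi}+\sum_kx_k\frac{p_{k,k'}}{\xi}+\sum_kx_k\frac{q_k}{\xi}+P_{\rm c}}$$ subject to C1: $\sum_np_n+\sum_kp_{k,k'}+\sum_kq_k\le P^{SC}_{\max}$; C2: $b_{k,k'}+w_k=x_kW^k_{MC}$ for all $k$; C3: $\rho(w_k,q_k,h_k)=x_kR^k_{MC}$ for all $k$; C4: $\sum_n\rho(B^n_{SC},p_n,g_n)+\sum_kx_k\rho(b_{k,k'},p_{k,k'},g_{k,k'})\ge R^{SC}_{\min}$. Problem (T) for MU $m$: maximize over $p_{m,m'}\ge0$,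 $b_{m,m'}\ge0$, $q_m\ge0$, $w_m\ge0$ the ratio $\frac{\rho(b_{m,m'},p_{m,m'},g_{m,m'})}{p_{m,m'}/\xi+q_m/\xi}$ subject to $b_{m,m'}+w_m\le W^m_{MC}$ and $\rho(w_m,q_m,h_m)\ge R^m_{MC}$ (no total power or minimum system rate constraint). *)

theory Defs
  imports Complex_Main "HOL-Library.Extended_Real"
begin

record params =
  nK :: nat
  nN :: nat
  N0 :: real
  xi :: real
  Pc :: real
  Pmax :: real
  Rmin :: real
  Wmc :: "nat \<Rightarrow> real"
  Rmc :: "nat \<Rightarrow> real"
  hh :: "nat \<Rightarrow> real"
  gkn :: "nat \<Rightarrow> nat \<Rightarrow> real"
  Bsc :: "nat \<Rightarrow> real"
  gn :: "nat \<Rightarrow> real"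

definition MUs :: "params \<Rightarrow> nat set" where "MUs S = {1..nK S}"
definition SUs :: "params \<Rightarrow> nat set" where "SUs S = {1..nN S}"

definition rho :: "params \<Rightarrow> real \<Rightarrow> real \<Rightarrow> real \<Rightarrow> real" where
  "rho S b p g = (if b = 0 then 0 else b * log 2 (1 + p * g / (b * N0 S)))"

text \<open>g_{k,k'} with k' an argmax of n \<mapsto> g_{k,n}.\<close>
definition gbest :: "params \<Rightarrow> nat \<Rightarrow> real" where
  "gbest S k = Max (gkn S k ` SUs S)"

definition xsel :: "nat set \<Rightarrow> nat \<Rightarrow> real" where
  "xsel Psi k = (if k \<in> Psi then 1 else 0)"

text \<open>Variables of (P2): p n = p_n, pk k = p_{k,k'}, bk k = b_{k,k'}, qk k = q_k, wk k = w_k.\<close>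
definition rate2 :: "params \<Rightarrow> nat set \<Rightarrow> (nat \<Rightarrow> real) \<Rightarrow> (nat \<Rightarrow> real) \<Rightarrow> (nat \<Rightarrow> real) \<Rightarrow> real" where
  "rate2 S Psi p pk bk =
     (\<Sum>n\<in>SUs S. rho S (Bsc S n) (p n) (gn S n))
     + (\<Sum>k\<in>MUs S. xsel Psi k * rho S (bk k) (pk k) (gbest S k))"

definition power2 :: "params \<Rightarrow> nat set \<Rightarrow> (nat \<Rightarrow> real) \<Rightarrow> (nat \<Rightarrow> real) \<Rightarrow> (nat \<Rightarrow> real) \<Rightarrow> real" where
  "power2 S Psi p pk qk =
     (\<Sum>n\<in>SUs S. p n / xi S) + (\<Sum>k\<in>MUs S. xsel Psi k * (pk k / xi S))
     + (\<Sum>k\<in>MUs S. xsel Psi k * (qk k / xi S)) + Pc S"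

text \<open>Feasible set of (P2_Psi); c1 / c4 indicate whether constraints C1 / C4 are kept.\<close>
definition feasible2 :: "params \<Rightarrow> bool \<Rightarrow> bool \<Rightarrow> nat set \<Rightarrow>
    (nat \<Rightarrow> real) \<Rightarrow> (nat \<Rightarrow> real) \<Rightarrow> (nat \<Rightarrow> real) \<Rightarrow> (nat \<Rightarrow> real) \<Rightarrow> (nat \<Rightarrow> real) \<Rightarrow> bool" where
  "feasible2 S c1 c4 Psi p pk bk qk wk \<longleftrightarrow>
     (\<forall>n\<in>SUs S. p n \<ge> 0) \<and>
     (\<forall>k\<in>MUs S. pk k \<ge> 0 \<and> bk k \<ge> 0 \<and> qk k \<ge> 0 \<and> wk k \<ge> 0) \<and>
     (c1 \<longrightarrow> (\<Sum>n\<in>SUs S. p n) + (\<Sum>k\<in>MUs S. pk k) + (\<Sum>k\<in>MUs S. qk k) \<le> Pmax S) \<and>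
     (\<forall>k\<in>MUs S. bk k + wk k = xsel Psi k * Wmc S k) \<and>
     (\<forall>k\<in>MUs S. rho S (wk k) (qk k) (hh S k) = xsel Psi k * Rmc S k) \<and>
     (c4 \<longrightarrow> rate2 S Psi p pk bk \<ge> Rmin S)"

text \<open>Optimal value EE*_Psi (supremum of the objective over the feasible set;
  -\<infinity> if infeasible).\<close>
definition EE2 :: "params \<Rightarrow> bool \<Rightarrow> bool \<Rightarrow> nat set \<Rightarrow> ereal" where
  "EE2 S c1 c4 Psi = Sup {ereal (rate2 S Psi p pk bk / power2 S Psi p pk qk) | p pk bk qk wk.
      feasible2 S c1 c4 Psi p pk bk qk wk}"

definition EEm :: "params \<Rightarrow> nat \<Rightarrow> ereal" where
  "EEm S m = Sup {ereal (rho S b p (gbest S m) / (p / xi S + q / xi S)) | p b q w.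
      p \<ge> 0 \<and> b \<ge> 0 \<and> q \<ge> 0 \<and> w \<ge> 0 \<and> b + w \<le> Wmc S m \<and> rho S w q (hh S m) \<ge> Rmc S m}"

definition valid_params :: "params \<Rightarrow> bool" where
  "valid_params S \<longleftrightarrow> nN S \<ge> 1 \<and> N0 S > 0 \<and> 0 < xi S \<and> xi S \<le> 1 \<and> Pc S > 0 \<and>
     Pmax S > 0 \<and> Rmin S \<ge> 0 \<and>
     (\<forall>k\<in>MUs S. Wmc S k > 0 \<and> Rmc S k > 0 \<and> hh S k > 0 \<and> (\<forall>n\<in>SUs S. gkn S k n > 0)) \<and>
     (\<forall>n\<in>SUs S. Bsc S n > 0 \<and> gn S n > 0)"

end

theory Submission
  imports Defs
begin

text \<open>
  Without C4, serving MU m only adds the rate r and the power c of MU m's trading point to the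
  numerator and the denominator of the objective, so by the mediant inequality
  EE*_{Psi \<union> {m}} \<le> max EE*_Psi EE*_m; this gives (3) and one direction of (1).
  Conversely, without C1 a trading point with r/c > e = EE*_Psi can be attached to any
  feasible point (A, B) of (P2_Psi). Since rates grow sublinearly in the power, near-optimal
  points of (P2_Psi) have bounded power B, so one can be chosen with e B - A < r - e c, and then
  (A + r)/(B + c) > e; this gives (2) and the other direction of (1).
\<close>

lemma mult_ln_one_plus_div_mono:
  fixes a b b' :: real
  assumes "0 < b" "b \<le> b'" "0 \<le> a"
  shows "b * ln (1 + a / b) \<le> b' * ln (1 + a / b')"
proof (rule DERIV_nonneg_imp_nondecreasing[of b b' "\<lambda>x. x * ln (1 + a / x)"])
  fix x assume x: "b \<le> x" "x \<le> b'"
  have xp: "x > 0" and xa: "x + a > 0" using x assms by linarith+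
  have pos: "1 + a / x > 0" using xp assms by (simp add: add_pos_nonneg)
  have deriv: "x * ((- (a / x^2)) / (1 + a / x)) = - (a / (x + a))"
  proof -
    have "1 + a / x = (x + a) / x" using xp by (simp add: field_simps)
    then show ?thesis using xp xa by (simp add: power2_eq_square)
  qed
  have "a / (x + a) \<le> ln (1 + a / x)"
  proof -
    have "ln (x / (x + a)) \<le> x / (x + a) - 1"
      using xp xa by (intro ln_le_minus_one) simp
    moreover have "ln (x / (x + a)) = - ln (1 + a / x)"
      using xp assms by (simp add: ln_div field_simps)
    moreover have "x / (x + a) - 1 = - (a / (x + a))"
      using xa by (simp add: field_simps)
    ultimately show ?thesis by linarith
  qed
  moreover have "((\<lambda>x. x * ln (1 + a / x)) has_real_derivative
      (1 * ln (1 + a / x) + x * ((- (a / x^2)) / (1 + a / x)))) (at x)"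
    using xp pos by (auto intro!: derivative_eq_intros simp: power2_eq_square field_simps)
  ultimately show "\<exists>y. ((\<lambda>x. x * ln (1 + a / x)) has_real_derivative y) (at x) \<and> 0 \<le> y"
    using deriv by auto
qed (use assms in auto)

lemma rho_nonneg:
  assumes "N0 S > 0" "b \<ge> 0" "p \<ge> 0" "g \<ge> 0"
  shows "rho S b p g \<ge> 0"
proof -
  have "0 \<le> p * g / (b * N0 S)" using assms by simp
  then have "0 \<le> log 2 (1 + p * g / (b * N0 S))" by simp
  then show ?thesis using assms by (auto simp: rho_def)
qed

lemma rho_mono_bandwidth:
  assumes "N0 S > 0" "0 \<le> b" "b \<le> b'" "p \<ge> 0" "g \<ge> 0"
  shows "rho S b p g \<le> rho S b' p g"
proof (cases "b = 0")
  case True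
  then show ?thesis using assms rho_nonneg[of S b' p g] by (simp add: rho_def)
next
  case False
  then have "b * ln (1 + (p * g / N0 S) / b) \<le> b' * ln (1 + (p * g / N0 S) / b')"
    using assms by (intro mult_ln_one_plus_div_mono) auto
  then have "b * ln (1 + p * g / (b * N0 S)) / ln 2 \<le> b' * ln (1 + p * g / (b' * N0 S)) / ln 2"
    by (simp add: divide_right_mono mult.commute)
  then show ?thesis using False assms by (simp add: rho_def log_def)
qed

text \<open>Inverse of rho in the power: the power at which bandwidth w and gain h carry rate R.\<close>
definition rate_power :: "params \<Rightarrow> real \<Rightarrow> real \<Rightarrow> real \<Rightarrow> real" where
  "rate_power S w h R = (2 powr (R / w) - 1) * w * N0 S / h"

lemma rho_rate_power:
  assumes "N0 S > 0" "w > 0" "h > 0"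
  shows "rho S w (rate_power S w h R) h = R"
proof -
  have "1 + rate_power S w h R * h / (w * N0 S) = 2 powr (R / w)"
    using assms by (simp add: rate_power_def field_simps)
  then show ?thesis using assms by (simp add: rho_def)
qed

lemma rate_power_pos:
  assumes "N0 S > 0" "w > 0" "h > 0" "R > 0"
  shows "rate_power S w h R > 0"
proof -
  have "2 powr (R / w) > 1" using assms by simp
  then show ?thesis using assms by (simp add: rate_power_def)
qed

lemma rate_power_le:
  assumes "N0 S > 0" "w > 0" "h > 0" "q \<ge> 0" "rho S w q h \<ge> R"
  shows "rate_power S w h R \<le> q"
proof -
  have "R \<le> w * log 2 (1 + q * h / (w * N0 S))" using assms by (simp add: rho_def)
  then have "R / w \<le> log 2 (1 + q * h / (w * N0 S))"
    using assms by (simp add: divide_le_eq mult.commute)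
  then have "2 powr (R / w) \<le> 2 powr (log 2 (1 + q * h / (w * N0 S)))" by simp
  also have "\<dots> = 1 + q * h / (w * N0 S)" using assms by (simp add: add_pos_nonneg)
  finally have "2 powr (R / w) - 1 \<le> q * h / (w * N0 S)" by simp
  then have "(2 powr (R / w) - 1) * (w * N0 S) \<le> q * h" using assms by (simp add: le_divide_eq)
  then show ?thesis using assms by (simp add: rate_power_def divide_le_eq algebra_simps)
qed

text \<open>Tangent line of ln at t: ln y \<le> ln t + y / t - 1.\<close>
lemma rho_le_linear:
  assumes "N0 S > 0" "0 \<le> b" "b \<le> W" "p \<ge> 0" "0 \<le> g" "g \<le> G" "t \<ge> 1"
  shows "rho S b p g \<le> W * ln t / ln 2 + p * G / (N0 S * t * ln 2)"
proof (cases "b = 0")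
  case True
  then show ?thesis using assms by (simp add: rho_def)
next
  case False
  then have bp: "b > 0" using assms by simp
  define y where "y = 1 + p * g / (b * N0 S)"
  have yp: "y > 0" using bp assms by (simp add: y_def add_pos_nonneg)
  have tp: "t > 0" using assms by simp
  have "ln (y / t) \<le> y / t - 1" using yp tp by (intro ln_le_minus_one) simp
  then have "ln y \<le> ln t + y / t - 1" using yp tp by (simp add: ln_div)
  then have "b * ln y \<le> b * (ln t + y / t - 1)" using bp by (simp add: mult_left_mono)
  also have "\<dots> = b * ln t + b / t - b + p * g / (N0 S * t)"
    using bp tp assms by (simp add: y_def field_simps)
  also have "\<dots> \<le> W * ln t + p * G / (N0 S * t)"
  proof -
    have "b / t \<le> b" using bp assms by (simp add: divide_le_eq)
    moreover have "b * ln t \<le> W * ln t" using assms by (simp add: mult_right_mono)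
    moreover have "p * g / (N0 S * t) \<le> p * G / (N0 S * t)"
      using assms tp by (simp add: divide_right_mono mult_left_mono)
    ultimately show ?thesis by linarith
  qed
  finally have "b * ln y / ln 2 \<le> (W * ln t + p * G / (N0 S * t)) / ln 2"
    by (simp add: divide_right_mono)
  then show ?thesis
    using bp by (simp add: rho_def log_def y_def add_divide_distrib mult.commute mult.left_commute)
qed

lemma mediant_le_max:
  fixes A B r c :: real
  assumes "B > 0" "c > 0"
  shows "(A + r) / (B + c) \<le> max (A / B) (r / c)"
proof -
  let ?M = "max (A / B) (r / c)"
  have "A \<le> ?M * B" "r \<le> ?M * c" using assms by (simp_all add: pos_divide_le_eq[symmetric])
  then have "A + r \<le> ?M * (B + c)" by (simp add: distrib_left)
  then show ?thesis using assms by (simp add: pos_divide_le_eq)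
qed

text \<open>The bound on A forces e B < 4 C on pairs with A/B > 3e/4.\<close>
lemma ratio_near_sup_additive:
  fixes Q :: "real \<Rightarrow> real \<Rightarrow> bool"
  assumes e: "e > 0" and d: "\<delta> > 0" and C: "C \<ge> 0"
    and sup: "\<And>e'. e' < e \<Longrightarrow> \<exists>A B. Q A B \<and> e' < A / B"
    and pos: "\<And>A B. Q A B \<Longrightarrow> B > 0"
    and bd: "\<And>A B. Q A B \<Longrightarrow> A \<le> C + (e/2) * B"
  shows "\<exists>A B. Q A B \<and> A - e * B > - \<delta>"
proof -
  define \<eta> where "\<eta> = min (e/4) (\<delta> * e / (4 * C + 1))"
  have "\<eta> > 0" using e d C by (simp add: \<eta>_def)
  then obtain A B where Q: "Q A B" and "e - \<eta> < A / B" using sup[of "e - \<eta>"] by auto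
  moreover have Bp: "B > 0" using pos Q .
  ultimately have A1: "(e - \<eta>) * B < A" by (simp add: pos_less_divide_eq)
  have "\<eta> \<le> e/4" unfolding \<eta>_def by (rule min.cobounded1)
  then have "(e/4) * B \<le> (e/2 - \<eta>) * B" using Bp by (intro mult_right_mono) auto
  also have "(e/2 - \<eta>) * B < C" using A1 bd[OF Q] by (simp add: algebra_simps)
  finally have eB: "e * B < 4 * C" by simp
  have "\<eta> * B \<le> (\<delta> * e / (4 * C + 1)) * B" using Bp by (intro mult_right_mono) (auto simp: \<eta>_def)
  also have "\<dots> = \<delta> * (e * B) / (4 * C + 1)" by simp
  also have "\<dots> < \<delta>"
  proof -
    have "\<delta> * (e * B) < \<delta> * (4 * C + 1)" using eB d by (intro mult_strict_left_mono) auto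
    then show ?thesis using C by (simp add: divide_less_eq)
  qed
  finally have "A - e * B > - \<delta>" using A1 by (simp add: algebra_simps)
  then show ?thesis using Q by blast
qed

lemma finite_MUs [simp]: "finite (MUs S)"
  by (simp add: MUs_def)

lemma finite_SUs [simp]: "finite (SUs S)"
  by (simp add: SUs_def)

lemma one_in_SUs: "valid_params S \<Longrightarrow> 1 \<in> SUs S"
  by (simp add: valid_params_def SUs_def)

lemma gbest_pos:
  assumes vp: "valid_params S" and k: "k \<in> MUs S"
  shows "gbest S k > 0"
proof -
  have "gkn S k 1 \<le> gbest S k"
    unfolding gbest_def using one_in_SUs[OF vp] by (intro Max_ge) auto
  moreover have "gkn S k 1 > 0" using vp k one_in_SUs[OF vp] by (auto simp: valid_params_def)
  ultimately show ?thesis by simp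
qed

lemma sum_xsel_insert:
  assumes "m \<in> MUs S" "m \<notin> Psi"
  shows "(\<Sum>k\<in>MUs S. xsel (insert m Psi) k * f k) = (\<Sum>k\<in>MUs S. xsel Psi k * f k) + f m"
proof -
  have "(\<Sum>k\<in>MUs S. xsel (insert m Psi) k * f k)
      = (\<Sum>k\<in>MUs S. xsel Psi k * f k + (if k = m then f k else 0))"
    using assms by (intro sum.cong) (auto simp: xsel_def)
  also have "\<dots> = (\<Sum>k\<in>MUs S. xsel Psi k * f k) + f m"
    using assms by (simp add: sum.distrib)
  finally show ?thesis .
qed

lemma rate2_insert:
  assumes "m \<in> MUs S" "m \<notin> Psi"
  shows "rate2 S (insert m Psi) p pk bk = rate2 S Psi p pk bk + rho S (bk m) (pk m) (gbest S m)"
  using assms by (simp add: rate2_def sum_xsel_insert)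

lemma power2_insert:
  assumes "m \<in> MUs S" "m \<notin> Psi"
  shows "power2 S (insert m Psi) p pk qk = power2 S Psi p pk qk + (pk m / xi S + qk m / xi S)"
  unfolding power2_def sum_xsel_insert[OF assms, of "\<lambda>k. pk k / xi S"]
    sum_xsel_insert[OF assms, of "\<lambda>k. qk k / xi S"]
  by simp

lemma rate2_fun_upd:
  assumes "m \<notin> Psi"
  shows "rate2 S Psi p (pk(m := x)) (bk(m := y)) = rate2 S Psi p pk bk"
  unfolding rate2_def using assms
  by (intro arg_cong2[where f="(+)"] refl sum.cong) (auto simp: xsel_def)

lemma power2_fun_upd:
  assumes "m \<notin> Psi"
  shows "power2 S Psi p (pk(m := x)) (qk(m := y)) = power2 S Psi p pk qk"
  unfolding power2_def using assms
  by (intro arg_cong2[where f="(+)"] refl sum.cong) (auto simp: xsel_def)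

lemma power2_ge_Pc:
  assumes "valid_params S" "feasible2 S c1 c4 Psi p pk bk qk wk"
  shows "Pc S \<le> power2 S Psi p pk qk"
proof -
  have xi: "xi S > 0" using assms by (simp add: valid_params_def)
  have "(\<Sum>n\<in>SUs S. p n / xi S) \<ge> 0"
    using assms xi by (intro sum_nonneg) (auto simp: feasible2_def)
  moreover have "(\<Sum>k\<in>MUs S. xsel Psi k * (f k / xi S)) \<ge> 0"
    if "\<forall>k\<in>MUs S. f k \<ge> 0" for f
    using that xi by (intro sum_nonneg) (auto simp: xsel_def)
  ultimately show ?thesis using assms(2) by (simp add: power2_def feasible2_def)
qed

lemma power2_pos:
  assumes "valid_params S" "feasible2 S c1 c4 Psi p pk bk qk wk"
  shows "power2 S Psi p pk qk > 0"
  using power2_ge_Pc[OF assms] assms(1) by (simp add: valid_params_def)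

definition bandwidth_total :: "params \<Rightarrow> real" where
  "bandwidth_total S = (\<Sum>n\<in>SUs S. Bsc S n) + (\<Sum>k\<in>MUs S. Wmc S k)"

definition gain_total :: "params \<Rightarrow> real" where
  "gain_total S = (\<Sum>n\<in>SUs S. gn S n) + (\<Sum>k\<in>MUs S. gbest S k)"

lemma bandwidth_total_nonneg:
  assumes "valid_params S"
  shows "bandwidth_total S \<ge> 0"
  using assms unfolding bandwidth_total_def
  by (intro add_nonneg_nonneg sum_nonneg) (auto simp: valid_params_def intro: less_imp_le)

lemma gain_total_ge:
  assumes vp: "valid_params S"
  shows "gain_total S \<ge> 0"
    and "n \<in> SUs S \<Longrightarrow> gn S n \<le> gain_total S"
    and "k \<in> MUs S \<Longrightarrow> gbest S k \<le> gain_total S"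
proof -
  have SU: "\<forall>n\<in>SUs S. gn S n \<ge> 0" using vp by (auto simp: valid_params_def)
  have MU: "\<forall>k\<in>MUs S. gbest S k \<ge> 0" using gbest_pos[OF vp] by (auto intro: less_imp_le)
  have "(\<Sum>n\<in>SUs S. gn S n) \<ge> 0" "(\<Sum>k\<in>MUs S. gbest S k) \<ge> 0"
    using SU MU by (auto intro: sum_nonneg)
  moreover have "n \<in> SUs S \<Longrightarrow> gn S n \<le> (\<Sum>n\<in>SUs S. gn S n)"
    using SU by (intro member_le_sum) auto
  moreover have "k \<in> MUs S \<Longrightarrow> gbest S k \<le> (\<Sum>k\<in>MUs S. gbest S k)"
    using MU by (intro member_le_sum) auto
  ultimately show "gain_total S \<ge> 0" "n \<in> SUs S \<Longrightarrow> gn S n \<le> gain_total S"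
    "k \<in> MUs S \<Longrightarrow> gbest S k \<le> gain_total S"
    by (auto simp: gain_total_def)
qed

lemma rate2_le_linear_power2:
  assumes vp: "valid_params S" and f: "feasible2 S c1 c4 Psi p pk bk qk wk" and t: "t \<ge> 1"
  shows "rate2 S Psi p pk bk \<le> bandwidth_total S * ln t / ln 2
           + (gain_total S * xi S / (N0 S * ln 2)) / t * power2 S Psi p pk qk"
proof -
  have xi: "xi S > 0" and N0: "N0 S > 0" using vp by (auto simp: valid_params_def)
  define D where "D = N0 S * t * ln 2"
  have D: "gain_total S / D \<ge> 0" using N0 t gain_total_ge(1)[OF vp] by (simp add: D_def)
  have SU: "rho S (Bsc S n) (p n) (gn S n) \<le> Bsc S n * ln t / ln 2 + p n * gain_total S / D"
    if "n \<in> SUs S" for n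
    unfolding D_def using that vp f t gain_total_ge[OF vp]
    by (intro rho_le_linear) (auto simp: valid_params_def feasible2_def intro: less_imp_le)
  have MU: "xsel Psi k * rho S (bk k) (pk k) (gbest S k)
      \<le> Wmc S k * ln t / ln 2 + xsel Psi k * (pk k * gain_total S / D)"
    if k: "k \<in> MUs S" for k
  proof (cases "k \<in> Psi")
    case True
    have "rho S (bk k) (pk k) (gbest S k) \<le> Wmc S k * ln t / ln 2 + pk k * gain_total S / D"
      unfolding D_def using True k vp f t gain_total_ge[OF vp] gbest_pos[OF vp k]
      by (intro rho_le_linear) (auto simp: valid_params_def feasible2_def xsel_def
          intro: less_imp_le dest!: bspec[where x=k])
    then show ?thesis using True by (simp add: xsel_def)
  next
    case False
    then show ?thesis using k vp t by (auto simp: valid_params_def xsel_def)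
  qed
  have "rate2 S Psi p pk bk \<le> (\<Sum>n\<in>SUs S. Bsc S n * ln t / ln 2 + p n * gain_total S / D)
       + (\<Sum>k\<in>MUs S. Wmc S k * ln t / ln 2 + xsel Psi k * (pk k * gain_total S / D))"
    unfolding rate2_def using SU MU by (intro add_mono sum_mono) auto
  also have "\<dots> = bandwidth_total S * ln t / ln 2
      + ((\<Sum>n\<in>SUs S. p n) + (\<Sum>k\<in>MUs S. xsel Psi k * pk k)) * (gain_total S / D)"
    by (simp add: bandwidth_total_def sum.distrib sum_divide_distrib[symmetric] sum_distrib_right
        sum_distrib_left add_divide_distrib algebra_simps)
  also have "\<dots> \<le> bandwidth_total S * ln t / ln 2 + (xi S * power2 S Psi p pk qk) * (gain_total S / D)"
  proof -
    have "xi S * power2 S Psi p pk qk = (\<Sum>n\<in>SUs S. p n) + (\<Sum>k\<in>MUs S. xsel Psi k * pk k)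
         + (\<Sum>k\<in>MUs S. xsel Psi k * qk k) + xi S * Pc S"
      unfolding power2_def using xi
      by (simp add: sum_divide_distrib[symmetric] field_simps)
    moreover have "(\<Sum>k\<in>MUs S. xsel Psi k * qk k) \<ge> 0"
      using f by (intro sum_nonneg) (auto simp: feasible2_def xsel_def)
    moreover have "xi S * Pc S \<ge> 0" using xi vp by (simp add: valid_params_def)
    ultimately have "(\<Sum>n\<in>SUs S. p n) + (\<Sum>k\<in>MUs S. xsel Psi k * pk k) \<le> xi S * power2 S Psi p pk qk"
      by linarith
    then show ?thesis using D by (intro add_left_mono mult_right_mono)
  qed
  also have "\<dots> = bandwidth_total S * ln t / ln 2
      + (gain_total S * xi S / (N0 S * ln 2)) / t * power2 S Psi p pk qk"
    by (simp add: D_def field_simps)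
  finally show ?thesis .
qed

lemma EE2_ge_feasible:
  assumes "feasible2 S c1 c4 Psi p pk bk qk wk"
  shows "ereal (rate2 S Psi p pk bk / power2 S Psi p pk qk) \<le> EE2 S c1 c4 Psi"
  unfolding EE2_def using assms by (intro Sup_upper) blast

lemma EEm_ge_feasible:
  assumes "p \<ge> 0" "b \<ge> 0" "q \<ge> 0" "w \<ge> 0" "b + w \<le> Wmc S m" "rho S w q (hh S m) \<ge> Rmc S m"
  shows "ereal (rho S b p (gbest S m) / (p / xi S + q / xi S)) \<le> EEm S m"
  unfolding EEm_def using assms by (intro Sup_upper) blast

text \<open>All SUs transmit at the power that gives SU 1 alone the rate Rmin + 1.\<close>
lemma feasible2_exists_pos_rate:
  assumes vp: "valid_params S"
  shows "\<exists>p pk bk qk wk. feasible2 S False c4 Psi p pk bk qk wk \<and> rate2 S Psi p pk bk > 0"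
proof -
  have N0: "N0 S > 0" and R0: "Rmin S \<ge> 0" using vp by (auto simp: valid_params_def)
  have B1: "Bsc S 1 > 0" "gn S 1 > 0" using vp one_in_SUs[OF vp] by (auto simp: valid_params_def)
  define P0 where "P0 = rate_power S (Bsc S 1) (gn S 1) (Rmin S + 1)"
  have P0: "P0 > 0" unfolding P0_def using N0 B1 R0 by (intro rate_power_pos) auto
  define qs where "qs = (\<lambda>k. if k \<in> Psi then rate_power S (Wmc S k) (hh S k) (Rmc S k) else 0)"
  define ws where "ws = (\<lambda>k. if k \<in> Psi then Wmc S k else (0::real))"
  let ?p = "\<lambda>n::nat. P0" and ?z = "\<lambda>k::nat. (0::real)"
  have "rho S (Bsc S 1) P0 (gn S 1) = Rmin S + 1"
    unfolding P0_def using rho_rate_power[OF N0 B1] .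
  moreover have "rho S (Bsc S 1) P0 (gn S 1) \<le> (\<Sum>n\<in>SUs S. rho S (Bsc S n) P0 (gn S n))"
    using vp one_in_SUs[OF vp] P0 N0
    by (intro member_le_sum rho_nonneg) (auto simp: valid_params_def intro: less_imp_le)
  ultimately have rate: "rate2 S Psi ?p ?z ?z \<ge> Rmin S + 1"
    by (simp add: rate2_def rho_def)
  have MU: "0 \<le> qs k \<and> 0 \<le> ws k \<and> 0 + ws k = xsel Psi k * Wmc S k \<and>
      rho S (ws k) (qs k) (hh S k) = xsel Psi k * Rmc S k" if k: "k \<in> MUs S" for k
  proof -
    have par: "Wmc S k > 0" "Rmc S k > 0" "hh S k > 0" using vp k by (auto simp: valid_params_def)
    then show ?thesis
      using rate_power_pos[OF N0 par(1,3,2)] rho_rate_power[OF N0 par(1,3), of "Rmc S k"]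
      by (simp add: qs_def ws_def xsel_def rho_def)
  qed
  have "0 \<le> P0" "Rmin S \<le> rate2 S Psi ?p ?z ?z" using P0 rate by auto
  then have "feasible2 S False c4 Psi ?p ?z ?z qs ws"
    unfolding feasible2_def using MU by blast
  moreover have "rate2 S Psi ?p ?z ?z > 0" using rate R0 by simp
  ultimately show ?thesis by blast
qed

lemma EE2_pos:
  assumes vp: "valid_params S"
  shows "0 < EE2 S False c4 Psi"
proof -
  obtain p pk bk qk wk where f: "feasible2 S False c4 Psi p pk bk qk wk"
    and r: "rate2 S Psi p pk bk > 0"
    using feasible2_exists_pos_rate[OF vp] by blast
  have "0 < ereal (rate2 S Psi p pk bk / power2 S Psi p pk qk)"
    using r power2_pos[OF vp f] by simp
  also have "\<dots> \<le> EE2 S False c4 Psi" by (rule EE2_ge_feasible[OF f])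
  finally show ?thesis .
qed

lemma feasible2_remove_MU:
  assumes "m \<notin> Psi" "feasible2 S c1 False (insert m Psi) p pk bk qk wk"
  shows "feasible2 S c1 False Psi p pk (bk(m := 0)) qk (wk(m := 0))"
proof -
  have "xsel (insert m Psi) k = xsel Psi k" if "k \<noteq> m" for k
    using that by (simp add: xsel_def)
  moreover have "xsel Psi m = 0" using assms by (simp add: xsel_def)
  ultimately show ?thesis using assms(2) by (auto simp: feasible2_def rho_def)
qed

lemma EE2_insert_le_max:
  assumes vp: "valid_params S" and m: "m \<in> MUs S" "m \<notin> Psi"
  shows "EE2 S c1 False (insert m Psi) \<le> max (EE2 S c1 False Psi) (EEm S m)"
  unfolding EE2_def[of S c1 False "insert m Psi"]
proof (rule Sup_least, clarify)
  fix p pk bk qk wk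
  assume f: "feasible2 S c1 False (insert m Psi) p pk bk qk wk"
  have xi: "xi S > 0" and Rm: "Rmc S m > 0" using vp m by (auto simp: valid_params_def)
  have xm: "xsel (insert m Psi) m = 1" by (simp add: xsel_def)
  have fm: "pk m \<ge> 0" "bk m \<ge> 0" "qk m \<ge> 0" "wk m \<ge> 0" "bk m + wk m = Wmc S m"
      "rho S (wk m) (qk m) (hh S m) = Rmc S m"
    using f m xm by (auto simp: feasible2_def)
  define r where "r = rho S (bk m) (pk m) (gbest S m)"
  define c where "c = pk m / xi S + qk m / xi S"
  have "qk m \<noteq> 0"
  proof
    assume "qk m = 0"
    then have "rho S (wk m) (qk m) (hh S m) = 0" by (simp add: rho_def)
    then show False using fm Rm by simp
  qed
  then have c: "c > 0" using fm xi by (simp add: c_def add_nonneg_pos)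
  have f': "feasible2 S c1 False Psi p pk (bk(m := 0)) qk (wk(m := 0))"
    by (rule feasible2_remove_MU[OF m(2) f])
  have "rate2 S (insert m Psi) p pk bk / power2 S (insert m Psi) p pk qk
      = (rate2 S Psi p pk bk + r) / (power2 S Psi p pk qk + c)"
    using m by (simp add: rate2_insert power2_insert r_def c_def)
  also have "\<dots> \<le> max (rate2 S Psi p pk bk / power2 S Psi p pk qk) (r / c)"
    by (rule mediant_le_max[OF power2_pos[OF vp f'] c])
  finally have "ereal (rate2 S (insert m Psi) p pk bk / power2 S (insert m Psi) p pk qk)
      \<le> max (ereal (rate2 S Psi p pk bk / power2 S Psi p pk qk)) (ereal (r / c))"
    by (auto simp: max_def)
  also have "\<dots> \<le> max (EE2 S c1 False Psi) (EEm S m)"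
  proof (rule max.mono)
    show "ereal (rate2 S Psi p pk bk / power2 S Psi p pk qk) \<le> EE2 S c1 False Psi"
      using EE2_ge_feasible[OF f'] rate2_fun_upd[OF m(2), of S p pk "pk m" bk 0] by simp
    show "ereal (r / c) \<le> EEm S m"
      unfolding r_def c_def using fm by (intro EEm_ge_feasible[where w="wk m"]) auto
  qed
  finally show "ereal (rate2 S (insert m Psi) p pk bk / power2 S (insert m Psi) p pk qk)
      \<le> max (EE2 S c1 False Psi) (EEm S m)" .
qed

lemma EE2_near_sup_additive:
  assumes vp: "valid_params S" and eE: "EE2 S False c4 Psi = ereal e" and \<delta>: "\<delta> > 0"
  shows "\<exists>p pk bk qk wk. feasible2 S False c4 Psi p pk bk qk wk \<and>
           rate2 S Psi p pk bk - e * power2 S Psi p pk qk > - \<delta>"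
proof -
  have xi: "xi S > 0" and N0: "N0 S > 0" using vp by (auto simp: valid_params_def)
  have e: "e > 0" using EE2_pos[OF vp, of c4 Psi] eE by simp
  define M where "M = gain_total S * xi S / (N0 S * ln 2)"
  have "M \<ge> 0" using gain_total_ge(1)[OF vp] xi N0 by (simp add: M_def)
  define t where "t = max 1 (2 * M / e)"
  have t: "t \<ge> 1" by (simp add: t_def)
  have Mt: "M / t \<le> e / 2"
  proof -
    have "2 * M / e \<le> t" by (simp add: t_def)
    then have "2 * M \<le> t * e" using e by (simp add: divide_le_eq)
    then show ?thesis using t by (simp add: divide_le_eq mult.commute)
  qed
  define C where "C = bandwidth_total S * ln t / ln 2"
  have C: "C \<ge> 0" using bandwidth_total_nonneg[OF vp] t by (simp add: C_def)
  define Q where "Q = (\<lambda>A B. \<exists>p pk bk qk wk. feasible2 S False c4 Psi p pk bk qk wk \<and>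
      A = rate2 S Psi p pk bk \<and> B = power2 S Psi p pk qk)"
  have "\<exists>A B. Q A B \<and> A - e * B > - \<delta>"
  proof (rule ratio_near_sup_additive[OF e \<delta> C])
    fix e' :: real assume "e' < e"
    then have "ereal e' < EE2 S False c4 Psi" using eE by simp
    then show "\<exists>A B. Q A B \<and> e' < A / B"
      unfolding EE2_def less_Sup_iff Q_def by fastforce
  next
    fix A B assume "Q A B"
    then obtain p pk bk qk wk where f: "feasible2 S False c4 Psi p pk bk qk wk"
      and AB: "A = rate2 S Psi p pk bk" "B = power2 S Psi p pk qk" unfolding Q_def by blast
    show B: "B > 0" using power2_pos[OF vp f] AB by simp
    have "A \<le> C + M / t * B" using rate2_le_linear_power2[OF vp f t] AB by (simp add: C_def M_def)
    also have "M / t * B \<le> e / 2 * B" using Mt B by (intro mult_right_mono) auto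
    finally show "A \<le> C + e / 2 * B" by simp
  qed
  then show ?thesis unfolding Q_def by blast
qed

text \<open>
  A trading point beating e can be made to satisfy C2 and C3 with equality: extra bandwidth
  only raises the rate of MU m, and the minimal power meeting R_MC only lowers the cost.
\<close>
lemma EEm_gt_imp_tight_point:
  assumes vp: "valid_params S" and m: "m \<in> MUs S" and e: "e \<ge> 0"
    and lt: "ereal e < EEm S m"
  obtains p b q w where "p \<ge> 0" "b \<ge> 0" "w \<ge> 0" "q > 0" "b + w = Wmc S m"
    "rho S w q (hh S m) = Rmc S m" "e * (p / xi S + q / xi S) < rho S b p (gbest S m)"
proof -
  have xi: "xi S > 0" and N0: "N0 S > 0" using vp by (auto simp: valid_params_def)
  have par: "Wmc S m > 0" "Rmc S m > 0" "hh S m > 0" using vp m by (auto simp: valid_params_def)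
  obtain p b q w where T: "p \<ge> 0" "b \<ge> 0" "q \<ge> 0" "w \<ge> 0" "b + w \<le> Wmc S m"
      "rho S w q (hh S m) \<ge> Rmc S m"
    and ratio: "e < rho S b p (gbest S m) / (p / xi S + q / xi S)"
    using lt unfolding EEm_def less_Sup_iff by auto
  have w: "w > 0"
  proof (rule ccontr)
    assume "\<not> w > 0"
    then have "w = 0" using T by simp
    then show False using T par by (simp add: rho_def)
  qed
  define q' where "q' = rate_power S w (hh S m) (Rmc S m)"
  have q'q: "q' \<le> q" unfolding q'_def using rate_power_le[OF N0 w par(3) T(3,6)] .
  have q': "q' > 0" unfolding q'_def using rate_power_pos[OF N0 w par(3,2)] .
  have den: "p / xi S + q / xi S > 0" using q'q q' T xi by (simp add: add_nonneg_pos)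
  have "e * (p / xi S + q' / xi S) \<le> e * (p / xi S + q / xi S)"
    using q'q xi e by (intro mult_left_mono) (auto simp: divide_right_mono)
  also have "\<dots> < rho S b p (gbest S m)" using ratio den by (simp add: pos_less_divide_eq)
  also have "\<dots> \<le> rho S (Wmc S m - w) p (gbest S m)"
    using N0 T gbest_pos[OF vp m] by (intro rho_mono_bandwidth) auto
  finally show thesis
    using T w q' rho_rate_power[OF N0 w par(3)] by (intro that[of p "Wmc S m - w" w q']) (auto simp: q'_def)
qed

lemma feasible2_insert_MU:
  assumes vp: "valid_params S" and m: "m \<in> MUs S" "m \<notin> Psi"
    and f: "feasible2 S False c4 Psi p pk bk qk wk"
    and MU: "p' \<ge> 0" "b \<ge> 0" "w \<ge> 0" "q \<ge> 0" "b + w = Wmc S m" "rho S w q (hh S m) = Rmc S m"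
  shows "feasible2 S False c4 (insert m Psi) p (pk(m := p')) (bk(m := b)) (qk(m := q)) (wk(m := w))"
proof -
  have "rho S b p' (gbest S m) \<ge> 0"
    using vp MU gbest_pos[OF vp m(1)] by (intro rho_nonneg) (auto simp: valid_params_def)
  then have "rate2 S Psi p pk bk \<le> rate2 S (insert m Psi) p (pk(m := p')) (bk(m := b))"
    using m by (simp add: rate2_insert rate2_fun_upd)
  moreover have "xsel (insert m Psi) k = xsel Psi k" if "k \<noteq> m" for k
    using that by (simp add: xsel_def)
  moreover have "xsel (insert m Psi) m = 1" by (simp add: xsel_def)
  ultimately show ?thesis
    using f MU unfolding feasible2_def
    by (auto simp del: fun_upd_apply simp: fun_upd_apply[of _ m])
qed

lemma EE2_insert_gt:
  assumes vp: "valid_params S" and m: "m \<in> MUs S" "m \<notin> Psi"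
    and lt: "EE2 S False c4 Psi < EEm S m"
  shows "EE2 S False c4 Psi < EE2 S False c4 (insert m Psi)"
proof -
  obtain e where eE: "EE2 S False c4 Psi = ereal e"
    using lt EE2_pos[OF vp, of c4 Psi] by (cases "EE2 S False c4 Psi") auto
  then have e: "e > 0" using EE2_pos[OF vp, of c4 Psi] by simp
  obtain p' b q w where MU: "p' \<ge> 0" "b \<ge> 0" "w \<ge> 0" "q > 0" "b + w = Wmc S m"
      "rho S w q (hh S m) = Rmc S m"
    and gain: "e * (p' / xi S + q / xi S) < rho S b p' (gbest S m)"
    using EEm_gt_imp_tight_point[OF vp m(1)] e lt eE by (metis less_imp_le)
  define r where "r = rho S b p' (gbest S m)"
  define c where "c = p' / xi S + q / xi S"
  obtain p pk bk qk wk where f: "feasible2 S False c4 Psi p pk bk qk wk"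
    and near: "rate2 S Psi p pk bk - e * power2 S Psi p pk qk > - (r - e * c)"
    using EE2_near_sup_additive[OF vp eE, of "r - e * c"] gain by (auto simp: r_def c_def)
  let ?pk = "pk(m := p')" and ?bk = "bk(m := b)" and ?qk = "qk(m := q)" and ?wk = "wk(m := w)"
  have f': "feasible2 S False c4 (insert m Psi) p ?pk ?bk ?qk ?wk"
    using feasible2_insert_MU[OF vp m f] MU by simp
  have rate: "rate2 S (insert m Psi) p ?pk ?bk = rate2 S Psi p pk bk + r"
    using m by (simp add: rate2_insert rate2_fun_upd r_def)
  have power: "power2 S (insert m Psi) p ?pk ?qk = power2 S Psi p pk qk + c"
    using m by (simp add: power2_insert power2_fun_upd c_def)
  have "e < rate2 S (insert m Psi) p ?pk ?bk / power2 S (insert m Psi) p ?pk ?qk"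
    using near power2_pos[OF vp f'] unfolding rate power
    by (simp add: pos_less_divide_eq algebra_simps)
  then have "ereal e < ereal (rate2 S (insert m Psi) p ?pk ?bk / power2 S (insert m Psi) p ?pk ?qk)"
    by simp
  also have "\<dots> \<le> EE2 S False c4 (insert m Psi)" by (rule EE2_ge_feasible[OF f'])
  finally show ?thesis using eE by simp
qed

theorem theorem4:
  fixes S :: params and Psi :: "nat set" and m :: nat
  assumes "valid_params S"
    and "Psi \<subseteq> MUs S"
    and "m \<in> MUs S - Psi"
  shows "(EE2 S False False (insert m Psi) > EE2 S False False Psi
            \<longleftrightarrow> EEm S m > EE2 S False False Psi)
       \<and> (EEm S m > EE2 S False True Psi
            \<longrightarrow> EE2 S False True (insert m Psi) > EE2 S False True Psi)
       \<and> (EE2 S True False (insert m Psi) > EE2 S True False Psi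
            \<longrightarrow> EEm S m > EE2 S True False Psi)"
proof -
  have m: "m \<in> MUs S" "m \<notin> Psi" using assms(3) by auto
  have only_if: "EEm S m > EE2 S c1 False Psi"
    if "EE2 S c1 False (insert m Psi) > EE2 S c1 False Psi" for c1
    using that EE2_insert_le_max[OF assms(1) m, of c1] by (auto simp: max_def split: if_splits)
  show ?thesis using only_if EE2_insert_gt[OF assms(1) m] by blast
qed

end
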